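(* Let $n\ge 2$, $\alpha\in(0,1)$ and $\rho\in\{\mathrm{VaR},\mathrm{ES}\}$, and let $\mathbf X=(X_1,\dots,X_n)$ be in $(L^0)^n$ when $\rho=\mathrm{VaR}$ and in $(L^1)^n$ when $\rho=\mathrm{ES}$. Then $\mathrm{DQ}^\rho_\alpha(\mathbf X)=0$ if and only if $\sum_{i=1}^nX_i\le\sum_{i=1}^n\rho_\alpha(X_i)$ almost surely. In particular, if $\sum_{i=1}^nX_i$ is almost surely constant, then $\mathrm{DQ}^{\mathrm{ES}}_\alpha(\mathbf X)=0$, and $\mathrm{DQ}^{\mathrm{VaR}}_\alpha(\mathbf X)=0$ provided $\alpha<1/n$.
   Context: Let $(\Omega,\mathcal F,\mathbb P)$ be an atomless probability space. $L^0$ is the set of all random variables and $L^1$ the set of integrable random variables; a.s. equal random variables are identified. For $\alpha\in[0,1)$ and $X\in L^0$, $\mathrm{VaR}_\alpha(X)=\inf\{x\in\mathbb R:\mathbb P(X\le x)\ge 1-\alpha\}$; in particular $\mathrm{VaR}_0(X)=\operatorname{ess\,sup}X$, possibly $+\infty$. For $\alpha\in(0,1)$ and $X\in L^1$, $\mathrm{ES}_\alpha(X)=\frac1\alpha\int_0^\alpha\mathrm{VaR}_\beta(X)\,\mathrm d\beta$, and $\mathrm{ES}_0(X)=\operatorname{ess\,sup}X$. For $\rho\in\{\mathrm{VaR},\mathrm{ES}\}$, $\alpha\in(0,1)$ and $\mathbf X=(X_1,\dots,X_n)$ (in $(L^0)^n$ when $\rho=\mathrm{VaR}$, in $(L^1)^n$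 when $\rho=\mathrm{ES}$), the diversification quotient is $\mathrm{DQ}^\rho_\alpha(\mathbf X)=\alpha^*/\alpha$, where $\alpha^*=\inf\{\beta\in(0,1):\rho_\beta(\sum_{i=1}^nX_i)\le\sum_{i=1}^n\rho_\alpha(X_i)\}$, with the convention $\inf\emptyset=1$. *)

theory Defs
  imports "HOL-Probability.Probability"
begin

definition atomless :: "'a measure \<Rightarrow> bool" where
  "atomless M \<longleftrightarrow> (\<forall>A\<in>sets M. 0 < measure M A \<longrightarrow>
      (\<exists>B\<in>sets M. B \<subseteq> A \<and> 0 < measure M B \<and> measure M B < measure M A))"

text \<open>Value-at-Risk at level alpha (meaningful for alpha in (0,1), where it is a real number):
  VaR_alpha(X) = inf {x. P(X \<le> x) \<ge> 1 - alpha}.\<close>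
definition VaR :: "'a measure \<Rightarrow> real \<Rightarrow> ('a \<Rightarrow> real) \<Rightarrow> real" where
  "VaR M \<alpha> X = Inf {x. measure M {\<omega> \<in> space M. X \<omega> \<le> x} \<ge> 1 - \<alpha>}"

definition ES :: "'a measure \<Rightarrow> real \<Rightarrow> ('a \<Rightarrow> real) \<Rightarrow> real" where
  "ES M \<alpha> X = (1 / \<alpha>) * (LINT \<beta>:{0<..<\<alpha>}|lborel. VaR M \<beta> X)"

definition DQ :: "(real \<Rightarrow> ('a \<Rightarrow> real) \<Rightarrow> real) \<Rightarrow> real \<Rightarrow> nat \<Rightarrow> (nat \<Rightarrow> 'a \<Rightarrow> real) \<Rightarrow> real" where
  "DQ \<rho> \<alpha> n X =
     (let S = {\<beta> \<in> {0<..<1}. \<rho> \<beta> (\<lambda>\<omega>. \<Sum>i<n. X i \<omega>) \<le> (\<Sum>i<n. \<rho> \<alpha> (X i))}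
      in (if S = {} then 1 else Inf S) / \<alpha>)"

end

theory Submission
  imports Defs
begin

text \<open>
  \<open>\<alpha>\<^sup>* = 0\<close> means that \<open>\<rho>\<^sub>\<beta>(S) \<le> b\<close> for arbitrarily small \<open>\<beta>\<close>, where \<open>S = \<Sum>X\<^sub>i\<close> and
  \<open>b = \<Sum>\<rho>\<^sub>\<alpha>(X\<^sub>i)\<close>. Since \<open>VaR\<^sub>\<beta>(S) \<le> b\<close> says \<open>P(S \<le> b) \<ge> 1 - \<beta>\<close>, this happens
  for VaR exactly when \<open>S \<le> b\<close> almost surely; for ES it follows from
  \<open>VaR\<^sub>\<beta> \<le> ES\<^sub>\<beta> \<le> sup\<^sub>\<gamma> VaR\<^sub>\<gamma>\<close>. These ES bounds, and \<open>E X \<le> ES\<^sub>\<alpha>(X)\<close>, rest on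
  \<open>E X = \<integral>\<^sub>0\<^sup>1 VaR\<^sub>\<gamma>(X) d\<gamma>\<close>, which holds because \<open>\<gamma> \<mapsto> VaR\<^sub>\<gamma>(X)\<close> under the
  uniform law on \<open>(0,1)\<close> has the law of \<open>X\<close>.

  If \<open>S = c\<close> almost surely, then \<open>c = E S = \<Sum>E X\<^sub>i \<le> \<Sum>ES\<^sub>\<alpha>(X\<^sub>i)\<close>. For VaR, the
  union bound gives \<open>P(\<exists>i. X\<^sub>i > VaR\<^sub>\<alpha>(X\<^sub>i)) \<le> n\<alpha> < 1\<close>, so some outcome with
  \<open>S = c\<close> has every \<open>X\<^sub>i \<le> VaR\<^sub>\<alpha>(X\<^sub>i)\<close>, whence \<open>c \<le> \<Sum>VaR\<^sub>\<alpha>(X\<^sub>i)\<close>.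
\<close>

lemma (in real_distribution) Inf_cdf_ge_le_iff:
  assumes "0 < t" "t < 1"
  shows "Inf {x. t \<le> cdf M x} \<le> y \<longleftrightarrow> t \<le> cdf M y"
proof -
  define A where "A = {x. t \<le> cdf M x}"
  have "eventually (\<lambda>x. t < cdf M x) at_top"
    using cdf_lim_at_top_prob assms(2) by (intro order_tendstoD) auto
  then obtain x where "t < cdf M x" using eventually_happens'[OF trivial_limit_at_top_linorder] by blast
  then have ne: "A \<noteq> {}" by (auto simp: A_def intro!: exI[of _ x])
  have "eventually (\<lambda>x. cdf M x < t) at_bot"
    using cdf_lim_at_bot assms(1) by (intro order_tendstoD) auto
  then obtain b where b: "\<And>x. x \<le> b \<Longrightarrow> cdf M x < t"
    by (auto simp: eventually_at_bot_linorder)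
  have bdd: "bdd_below A"
    by (rule bdd_belowI[of _ b]) (metis A_def b linorder_not_le mem_Collect_eq less_imp_le)
  have Inf_in: "t \<le> cdf M (Inf A)"
  proof (rule tendsto_lowerbound)
    show "(cdf M \<longlongrightarrow> cdf M (Inf A)) (at_right (Inf A))"
      using cdf_is_right_cont[of "Inf A"] by (simp add: continuous_within)
    show "\<forall>\<^sub>F y in at_right (Inf A). t \<le> cdf M y"
      unfolding eventually_at_right_field
    proof (intro exI[of _ "Inf A + 1"] conjI allI impI)
      fix y assume "Inf A < y" "y < Inf A + 1"
      then obtain z where "z \<in> A" "z < y" using cInf_lessD[OF ne] by blast
      then show "t \<le> cdf M y" using cdf_nondecreasing[of z y] by (auto simp: A_def)
    qed simp
  qed simp
  show ?thesis
    using Inf_in cdf_nondecreasing[of "Inf A" y] cInf_lower[OF _ bdd, of y]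
    unfolding A_def[symmetric] by (auto simp: A_def)
qed

lemma DQ_eq_0_iff:
  assumes "0 < \<alpha>"
  shows "DQ \<rho> \<alpha> n X = 0 \<longleftrightarrow>
    (\<forall>\<epsilon>>0. \<exists>\<beta>\<in>{0<..<1}. \<beta> < \<epsilon> \<and> \<rho> \<beta> (\<lambda>\<omega>. \<Sum>i<n. X i \<omega>) \<le> (\<Sum>i<n. \<rho> \<alpha> (X i)))"
proof -
  define S where "S = {\<beta> \<in> {0<..<1}. \<rho> \<beta> (\<lambda>\<omega>. \<Sum>i<n. X i \<omega>) \<le> (\<Sum>i<n. \<rho> \<alpha> (X i))}"
  have bdd: "bdd_below S" unfolding S_def by (auto intro: bdd_belowI[of _ 0])
  have "DQ \<rho> \<alpha> n X = 0 \<longleftrightarrow> S \<noteq> {} \<and> Inf S = 0"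
    using assms unfolding DQ_def S_def Let_def by simp
  also have "\<dots> \<longleftrightarrow> (\<forall>\<epsilon>>0. \<exists>\<beta>\<in>S. \<beta> < \<epsilon>)"
  proof
    assume "S \<noteq> {} \<and> Inf S = 0"
    then show "\<forall>\<epsilon>>0. \<exists>\<beta>\<in>S. \<beta> < \<epsilon>" using cInf_lessD[of S] by simp
  next
    assume small: "\<forall>\<epsilon>>0. \<exists>\<beta>\<in>S. \<beta> < \<epsilon>"
    then have "S \<noteq> {}" using zero_less_one by blast
    moreover have "0 \<le> Inf S"
      using \<open>S \<noteq> {}\<close> by (intro cInf_greatest) (auto simp: S_def)
    moreover have "\<not> 0 < Inf S"
      using small cInf_lower[OF _ bdd] by (meson not_le)
    ultimately show "S \<noteq> {} \<and> Inf S = 0" by simp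
  qed
  also have "\<dots> \<longleftrightarrow>
      (\<forall>\<epsilon>>0. \<exists>\<beta>\<in>{0<..<1}. \<beta> < \<epsilon> \<and> \<rho> \<beta> (\<lambda>\<omega>. \<Sum>i<n. X i \<omega>) \<le> (\<Sum>i<n. \<rho> \<alpha> (X i)))"
    unfolding S_def by blast
  finally show ?thesis .
qed

lemma arbitrarily_small_in_unit_interval:
  assumes "\<And>\<beta>. 0 < \<beta> \<Longrightarrow> \<beta> < 1 \<Longrightarrow> P \<beta>"
  shows "\<forall>\<epsilon>>0. \<exists>\<beta>\<in>{0<..<1::real}. \<beta> < \<epsilon> \<and> P \<beta>"
proof (intro allI impI)
  fix \<epsilon> :: real assume "0 < \<epsilon>"
  then obtain \<beta> where "0 < \<beta>" "\<beta> < \<epsilon>" "\<beta> < 1"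
    using field_lbound_gt_zero[OF _ zero_less_one] by blast
  then show "\<exists>\<beta>\<in>{0<..<1}. \<beta> < \<epsilon> \<and> P \<beta>" using assms by auto
qed

lemma
  fixes f :: "'b \<Rightarrow> real"
  assumes f: "set_integrable M A f" and A: "A \<in> sets M" "emeasure M A \<noteq> \<infinity>"
  shows set_integral_ge_const: "(\<And>x. x \<in> A \<Longrightarrow> c \<le> f x) \<Longrightarrow> measure M A * c \<le> (LINT x:A|M. f x)"
    and set_integral_le_const: "(\<And>x. x \<in> A \<Longrightarrow> f x \<le> c) \<Longrightarrow> (LINT x:A|M. f x) \<le> measure M A * c"
proof -
  have const: "set_integrable M A (\<lambda>_. c)"
    unfolding set_integrable_def using A
    by (intro integrable_scaleR_left integrable_real_indicator) (auto simp: less_top)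
  show "(\<And>x. x \<in> A \<Longrightarrow> c \<le> f x) \<Longrightarrow> measure M A * c \<le> (LINT x:A|M. f x)"
    using set_integral_mono[OF const f] set_integral_const[OF A, of c] by simp
  show "(\<And>x. x \<in> A \<Longrightarrow> f x \<le> c) \<Longrightarrow> (LINT x:A|M. f x) \<le> measure M A * c"
    using set_integral_mono[OF f const] set_integral_const[OF A, of c] by simp
qed

lemma measure_lborel_unit_interval_inter_atLeast:
  fixes p :: real
  assumes "0 \<le> p" "p \<le> 1"
  shows "measure lborel ({0<..<1} \<inter> {1 - p..}) = p"
proof (cases "p = 1")
  case True
  then have "{0<..<1} \<inter> {1 - p..} = {0<..<1::real}" by auto
  then show ?thesis using True by simp
next
  case False
  then have "{0<..<1} \<inter> {1 - p..} = {1 - p..<1}" using assms by auto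
  then show ?thesis using assms(1) by simp
qed

context prob_space
begin

lemma VaR_le_iff:
  fixes X :: "'a \<Rightarrow> real"
  assumes [measurable]: "X \<in> borel_measurable M" and "0 < \<gamma>" "\<gamma> < 1"
  shows "VaR M \<gamma> X \<le> x \<longleftrightarrow> 1 - \<gamma> \<le> prob {\<omega> \<in> space M. X \<omega> \<le> x}"
proof -
  interpret D: real_distribution "distr M borel X" by simp
  have cdf_eq: "cdf (distr M borel X) y = prob {\<omega> \<in> space M. X \<omega> \<le> y}" for y
    unfolding cdf_def by (subst measure_distr) (auto intro!: arg_cong[where f=prob])
  show ?thesis
    using D.Inf_cdf_ge_le_iff[of "1 - \<gamma>" x] assms(2,3) by (simp add: VaR_def cdf_eq)
qed

lemma VaR_antimono:
  fixes X :: "'a \<Rightarrow> real"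
  assumes "X \<in> borel_measurable M" and "0 < \<gamma>" "\<gamma> \<le> \<delta>" "\<delta> < 1"
  shows "VaR M \<delta> X \<le> VaR M \<gamma> X"
  using VaR_le_iff[OF assms(1), of \<gamma> "VaR M \<gamma> X"] VaR_le_iff[OF assms(1), of \<delta> "VaR M \<gamma> X"] assms
  by simp

lemma prob_VaR_less_le:
  fixes X :: "'a \<Rightarrow> real"
  assumes [measurable]: "X \<in> borel_measurable M" and "0 < \<gamma>" "\<gamma> < 1"
  shows "prob {\<omega> \<in> space M. VaR M \<gamma> X < X \<omega>} \<le> \<gamma>"
  using VaR_le_iff[OF assms, of "VaR M \<gamma> X"] prob_neg[of "\<lambda>\<omega>. X \<omega> \<le> VaR M \<gamma> X"]
  by (simp add: not_le)

lemma AE_le_imp_VaR_le: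
  fixes Y :: "'a \<Rightarrow> real"
  assumes [measurable]: "Y \<in> borel_measurable M"
    and "AE \<omega> in M. Y \<omega> \<le> c" and "0 < \<gamma>" "\<gamma> < 1"
  shows "VaR M \<gamma> Y \<le> c"
proof -
  have "prob {\<omega> \<in> space M. Y \<omega> \<le> c} = 1"
    using assms(2) by (subst prob_Collect_eq_1) auto
  then show ?thesis using VaR_le_iff[OF assms(1,3,4)] assms(3) by simp
qed

lemma AE_le_iff_VaR_le_arbitrarily_small:
  fixes Y :: "'a \<Rightarrow> real"
  assumes [measurable]: "Y \<in> borel_measurable M"
  shows "(AE \<omega> in M. Y \<omega> \<le> c) \<longleftrightarrow> (\<forall>\<epsilon>>0. \<exists>\<beta>\<in>{0<..<1}. \<beta> < \<epsilon> \<and> VaR M \<beta> Y \<le> c)"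
proof
  assume "AE \<omega> in M. Y \<omega> \<le> c"
  then show "\<forall>\<epsilon>>0. \<exists>\<beta>\<in>{0<..<1}. \<beta> < \<epsilon> \<and> VaR M \<beta> Y \<le> c"
    by (intro arbitrarily_small_in_unit_interval AE_le_imp_VaR_le[OF assms])
next
  assume small: "\<forall>\<epsilon>>0. \<exists>\<beta>\<in>{0<..<1}. \<beta> < \<epsilon> \<and> VaR M \<beta> Y \<le> c"
  have "1 \<le> prob {\<omega> \<in> space M. Y \<omega> \<le> c}"
  proof (rule field_le_epsilon)
    fix \<epsilon> :: real assume "0 < \<epsilon>"
    then obtain \<beta> where "\<beta> \<in> {0<..<1}" "\<beta> < \<epsilon>" "VaR M \<beta> Y \<le> c" using small by blast
    then have "1 - \<beta> \<le> prob {\<omega> \<in> space M. Y \<omega> \<le> c}" using VaR_le_iff[OF assms, of \<beta> c] by simp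
    with \<open>\<beta> < \<epsilon>\<close> show "1 \<le> prob {\<omega> \<in> space M. Y \<omega> \<le> c} + \<epsilon>" by linarith
  qed
  then have "prob {\<omega> \<in> space M. Y \<omega> \<le> c} = 1" using prob_le_1 by (intro antisym)
  then show "AE \<omega> in M. Y \<omega> \<le> c" by (subst (asm) prob_Collect_eq_1) auto
qed

text \<open>Outside \<open>(0,1)\<close> the value of VaR is junk (an infimum of an empty or unbounded set),
  hence the cut-off.\<close>

lemma borel_measurable_VaR_unit_interval:
  fixes X :: "'a \<Rightarrow> real"
  assumes "X \<in> borel_measurable M"
  shows "(\<lambda>\<gamma>. if \<gamma> \<in> {0<..<1} then VaR M \<gamma> X else 0) \<in> borel_measurable borel"
proof -
  have "mono_on {0<..<1::real} (\<lambda>\<gamma>. - VaR M \<gamma> X)"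
    by (rule mono_onI) (auto intro!: VaR_antimono assms)
  then have "(\<lambda>\<gamma>. - VaR M \<gamma> X) \<in> borel_measurable (restrict_space borel {0<..<1})"
    by (rule borel_measurable_mono_on_fnc)
  then have "(\<lambda>\<gamma>. if \<gamma> \<in> {0<..<1} then - VaR M \<gamma> X else 0) \<in> borel_measurable borel"
    by (subst (asm) measurable_restrict_space_iff[where c=0]) auto
  then have "(\<lambda>\<gamma>. - (if \<gamma> \<in> {0<..<1} then - VaR M \<gamma> X else 0)) \<in> borel_measurable borel"
    by measurable
  then show ?thesis by (simp add: if_distrib cong: if_cong)
qed

lemma distr_VaR_unit_interval:
  fixes X :: "'a \<Rightarrow> real"
  assumes [measurable]: "X \<in> borel_measurable M"
  shows "distr (density lborel (\<lambda>\<gamma>. ennreal (indicator {0<..<1} \<gamma>))) borel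
           (\<lambda>\<gamma>. if \<gamma> \<in> {0<..<1} then VaR M \<gamma> X else 0) = distr M borel X"
proof -
  define U where "U = density lborel (\<lambda>\<gamma>::real. ennreal (indicator {0<..<1} \<gamma>))"
  define Q where "Q = (\<lambda>\<gamma>::real. if \<gamma> \<in> {0<..<1} then VaR M \<gamma> X else 0)"
  have [measurable]: "Q \<in> borel_measurable borel"
    unfolding Q_def by (rule borel_measurable_VaR_unit_interval[OF assms])
  have emeasure_U: "emeasure U A = emeasure lborel ({0<..<1} \<inter> A)" if "A \<in> sets borel" for A
    using that unfolding U_def ennreal_indicator by (subst emeasure_restricted) auto
  have [simp]: "space U = UNIV" "sets U = sets borel" by (simp_all add: U_def)
  interpret U: prob_space U
    by (rule prob_spaceI) (simp add: emeasure_U)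
  interpret DX: real_distribution "distr M borel X" by simp
  have [measurable]: "Q \<in> borel_measurable U" by (simp add: U_def)
  interpret DQ: real_distribution "distr U borel Q" by (rule U.real_distribution_distr) simp
  have "cdf (distr U borel Q) x = cdf (distr M borel X) x" for x
  proof -
    define F where "F = prob {\<omega> \<in> space M. X \<omega> \<le> x}"
    have F_cdf: "cdf (distr M borel X) x = F"
      unfolding cdf_def F_def by (subst measure_distr) (auto intro!: arg_cong[where f=prob])
    have "cdf (distr U borel Q) x = measure U (Q -` {..x})"
      unfolding cdf_def by (subst measure_distr) auto
    also have "\<dots> = measure lborel ({0<..<1} \<inter> Q -` {..x})"
      unfolding measure_def by (subst emeasure_U) (auto intro: measurable_sets_borel[of Q borel])
    also have "{0<..<1} \<inter> Q -` {..x} = {0<..<1} \<inter> {1 - F..}"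
      using VaR_le_iff[OF assms] by (auto simp: F_def Q_def)
    also have "measure lborel \<dots> = F"
      by (rule measure_lborel_unit_interval_inter_atLeast) (auto simp: F_def)
    finally show ?thesis using F_cdf by simp
  qed
  then have "distr U borel Q = distr M borel X" by (intro cdf_unique ext) auto
  then show ?thesis by (simp only: U_def Q_def)
qed

lemma
  fixes X :: "'a \<Rightarrow> real"
  assumes "integrable M X"
  shows set_integrable_VaR: "set_integrable lborel {0<..<1} (\<lambda>\<gamma>. VaR M \<gamma> X)"
    and set_integral_VaR: "(LINT \<gamma>:{0<..<1}|lborel. VaR M \<gamma> X) = expectation X"
proof -
  have [measurable]: "X \<in> borel_measurable M" using assms by simp
  define Q where "Q = (\<lambda>\<gamma>::real. if \<gamma> \<in> {0<..<1} then VaR M \<gamma> X else 0)"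
  have [measurable]: "Q \<in> borel_measurable borel"
    unfolding Q_def by (rule borel_measurable_VaR_unit_interval) simp
  define g :: "real \<Rightarrow> real" where "g = indicator {0<..<1}"
  have [measurable]: "g \<in> borel_measurable lborel" and g_nonneg: "AE x in lborel. 0 \<le> g x"
    by (simp_all add: g_def)
  define U where "U = density lborel (\<lambda>\<gamma>. ennreal (g \<gamma>))"
  have law: "distr U borel Q = distr M borel X"
    unfolding U_def g_def Q_def by (rule distr_VaR_unit_interval) simp
  have "integrable U Q \<longleftrightarrow> integrable (distr U borel Q) (\<lambda>x. x)"
    by (subst integrable_distr_eq) (auto simp: U_def)
  also have "\<dots> \<longleftrightarrow> integrable M X"
    unfolding law by (subst integrable_distr_eq) auto
  finally have "integrable U Q" using assms by simp
  have "integral\<^sup>L U Q = integral\<^sup>L (distr U borel Q) (\<lambda>x. x)"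
    by (subst integral_distr) (auto simp: U_def)
  also have "\<dots> = expectation X"
    unfolding law by (subst integral_distr) auto
  finally have "integral\<^sup>L U Q = expectation X" .
  moreover have "(\<lambda>\<gamma>. g \<gamma> * Q \<gamma>) = (\<lambda>\<gamma>. indicator {0<..<1} \<gamma> * VaR M \<gamma> X)"
    by (auto simp: fun_eq_iff g_def Q_def indicator_def)
  ultimately show "set_integrable lborel {0<..<1} (\<lambda>\<gamma>. VaR M \<gamma> X)"
    and "(LINT \<gamma>:{0<..<1}|lborel. VaR M \<gamma> X) = expectation X"
    using \<open>integrable U Q\<close>
    unfolding set_integrable_def set_lebesgue_integral_def U_def
    by (simp_all add: integrable_density integral_density g_nonneg)
qed

lemma set_integrable_VaR_subset:
  fixes X :: "'a \<Rightarrow> real"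
  assumes "integrable M X" and "A \<in> sets borel" "A \<subseteq> {0<..<1}"
  shows "set_integrable lborel A (\<lambda>\<gamma>. VaR M \<gamma> X)"
  using set_integrable_subset[OF set_integrable_VaR[OF assms(1)]] assms(2,3) by simp

lemma VaR_le_ES:
  fixes X :: "'a \<Rightarrow> real"
  assumes "integrable M X" and "0 < \<beta>" "\<beta> < 1"
  shows "VaR M \<beta> X \<le> ES M \<beta> X"
proof -
  have "measure lborel {0<..<\<beta>} * VaR M \<beta> X \<le> (LINT \<gamma>:{0<..<\<beta>}|lborel. VaR M \<gamma> X)"
    by (rule set_integral_ge_const)
      (use assms in \<open>auto intro!: set_integrable_VaR_subset VaR_antimono\<close>)
  then show ?thesis using assms(2) by (simp add: ES_def field_simps)
qed

lemma ES_le_of_VaR_le: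
  fixes X :: "'a \<Rightarrow> real"
  assumes "integrable M X" and "0 < \<beta>" "\<beta> < 1"
    and "\<And>\<gamma>. 0 < \<gamma> \<Longrightarrow> \<gamma> < 1 \<Longrightarrow> VaR M \<gamma> X \<le> c"
  shows "ES M \<beta> X \<le> c"
proof -
  have "(LINT \<gamma>:{0<..<\<beta>}|lborel. VaR M \<gamma> X) \<le> measure lborel {0<..<\<beta>} * c"
    by (rule set_integral_le_const) (use assms in \<open>auto intro!: set_integrable_VaR_subset\<close>)
  then show ?thesis using assms(2) by (simp add: ES_def field_simps)
qed

lemma expectation_le_ES:
  fixes X :: "'a \<Rightarrow> real"
  assumes "integrable M X" and "0 < \<beta>" "\<beta> < 1"
  shows "expectation X \<le> ES M \<beta> X"
proof -
  have [measurable]: "X \<in> borel_measurable M" using assms(1) by simp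
  have split: "{0<..<1} = {0<..<\<beta>} \<union> {\<beta>..<1::real}" using assms by auto
  have "expectation X = (LINT \<gamma>:{0<..<\<beta>}|lborel. VaR M \<gamma> X) + (LINT \<gamma>:{\<beta>..<1}|lborel. VaR M \<gamma> X)"
    unfolding set_integral_VaR[OF assms(1), symmetric] split
    by (rule set_integral_Un) (use assms in \<open>auto intro: set_integrable_VaR_subset\<close>)
  also have "(LINT \<gamma>:{0<..<\<beta>}|lborel. VaR M \<gamma> X) = \<beta> * ES M \<beta> X"
    using assms(2) by (simp add: ES_def)
  also have "(LINT \<gamma>:{\<beta>..<1}|lborel. VaR M \<gamma> X) \<le> measure lborel {\<beta>..<1} * VaR M \<beta> X"
    by (rule set_integral_le_const)
      (use assms in \<open>auto intro!: set_integrable_VaR_subset VaR_antimono\<close>)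
  also have "\<dots> \<le> (1 - \<beta>) * ES M \<beta> X"
    using VaR_le_ES[OF assms] assms by (auto intro: mult_left_mono)
  finally show ?thesis by (simp add: algebra_simps)
qed

lemma AE_le_iff_ES_le_arbitrarily_small:
  fixes Y :: "'a \<Rightarrow> real"
  assumes "integrable M Y"
  shows "(AE \<omega> in M. Y \<omega> \<le> c) \<longleftrightarrow> (\<forall>\<epsilon>>0. \<exists>\<beta>\<in>{0<..<1}. \<beta> < \<epsilon> \<and> ES M \<beta> Y \<le> c)"
proof
  assume "AE \<omega> in M. Y \<omega> \<le> c"
  then have "ES M \<beta> Y \<le> c" if "0 < \<beta>" "\<beta> < 1" for \<beta>
    using assms that by (intro ES_le_of_VaR_le AE_le_imp_VaR_le) auto
  then show "\<forall>\<epsilon>>0. \<exists>\<beta>\<in>{0<..<1}. \<beta> < \<epsilon> \<and> ES M \<beta> Y \<le> c"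
    by (rule arbitrarily_small_in_unit_interval)
next
  assume "\<forall>\<epsilon>>0. \<exists>\<beta>\<in>{0<..<1}. \<beta> < \<epsilon> \<and> ES M \<beta> Y \<le> c"
  then have "\<forall>\<epsilon>>0. \<exists>\<beta>\<in>{0<..<1}. \<beta> < \<epsilon> \<and> VaR M \<beta> Y \<le> c"
    using VaR_le_ES[OF assms] by (fastforce intro: order.trans)
  then show "AE \<omega> in M. Y \<omega> \<le> c"
    using AE_le_iff_VaR_le_arbitrarily_small assms by simp
qed

lemma AE_sum_eq_le_sum_ES:
  fixes X :: "'i \<Rightarrow> 'a \<Rightarrow> real"
  assumes "finite I" and X: "\<And>i. i \<in> I \<Longrightarrow> integrable M (X i)"
    and sum_eq: "AE \<omega> in M. (\<Sum>i\<in>I. X i \<omega>) = c" and "0 < \<alpha>" "\<alpha> < 1"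
  shows "c \<le> (\<Sum>i\<in>I. ES M \<alpha> (X i))"
proof -
  have "(\<lambda>\<omega>. \<Sum>i\<in>I. X i \<omega>) \<in> borel_measurable M"
    using X by (auto intro: borel_measurable_sum)
  then have "c = expectation (\<lambda>\<omega>. \<Sum>i\<in>I. X i \<omega>)"
    using integral_cong_AE[OF _ _ sum_eq] by (simp add: prob_space)
  also have "\<dots> = (\<Sum>i\<in>I. expectation (X i))"
    using X by (rule Bochner_Integration.integral_sum)
  also have "\<dots> \<le> (\<Sum>i\<in>I. ES M \<alpha> (X i))"
    using X assms(4,5) by (intro sum_mono expectation_le_ES) auto
  finally show ?thesis .
qed

lemma AE_sum_eq_le_sum_VaR:
  fixes X :: "'i \<Rightarrow> 'a \<Rightarrow> real"
  assumes "finite I" and X: "\<And>i. i \<in> I \<Longrightarrow> X i \<in> borel_measurable M"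
    and sum_eq: "AE \<omega> in M. (\<Sum>i\<in>I. X i \<omega>) = c"
    and "0 < \<alpha>" "\<alpha> < 1" "real (card I) * \<alpha> < 1"
  shows "c \<le> (\<Sum>i\<in>I. VaR M \<alpha> (X i))"
proof (rule ccontr)
  assume "\<not> c \<le> (\<Sum>i\<in>I. VaR M \<alpha> (X i))"
  define B where "B = (\<Union>i\<in>I. {\<omega> \<in> space M. VaR M \<alpha> (X i) < X i \<omega>})"
  have exceed_event: "{\<omega> \<in> space M. VaR M \<alpha> (X i) < X i \<omega>} \<in> events" if "i \<in> I" for i
  proof -
    have [measurable]: "X i \<in> borel_measurable M" using X[OF that] .
    show ?thesis by measurable
  qed
  have B_event: "B \<in> events"
    unfolding B_def using \<open>finite I\<close> exceed_event by auto
  have "AE \<omega> in M. \<omega> \<in> B"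
    using sum_eq
  proof (rule AE_mp[OF _ AE_I2], intro impI)
    fix \<omega> assume "\<omega> \<in> space M" "(\<Sum>i\<in>I. X i \<omega>) = c"
    have "\<not> (\<forall>i\<in>I. X i \<omega> \<le> VaR M \<alpha> (X i))"
    proof
      assume "\<forall>i\<in>I. X i \<omega> \<le> VaR M \<alpha> (X i)"
      then have "(\<Sum>i\<in>I. X i \<omega>) \<le> (\<Sum>i\<in>I. VaR M \<alpha> (X i))" by (intro sum_mono) blast
      then show False using \<open>(\<Sum>i\<in>I. X i \<omega>) = c\<close> \<open>\<not> c \<le> _\<close> by simp
    qed
    then show "\<omega> \<in> B" using \<open>\<omega> \<in> space M\<close> by (auto simp: B_def not_le)
  qed
  then have "1 = prob B" using AE_in_set_eq_1[OF B_event] by simp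
  also have "\<dots> \<le> (\<Sum>i\<in>I. prob {\<omega> \<in> space M. VaR M \<alpha> (X i) < X i \<omega>})"
    unfolding B_def using \<open>finite I\<close> exceed_event by (intro finite_measure_subadditive_finite) auto
  also have "\<dots> \<le> (\<Sum>i\<in>I. \<alpha>)"
    using X assms(4,5) by (intro sum_mono prob_VaR_less_le) auto
  also have "\<dots> = real (card I) * \<alpha>" by simp
  finally show False using \<open>real (card I) * \<alpha> < 1\<close> by simp
qed

end

theorem theorem1:
  fixes M :: "'a measure" and n :: nat and \<alpha> :: real and X :: "nat \<Rightarrow> 'a \<Rightarrow> real"
  assumes "prob_space M" and "atomless M"
    and "n \<ge> 2" and "0 < \<alpha>" and "\<alpha> < 1"
  shows
    "((\<forall>i<n. X i \<in> borel_measurable M) \<longrightarrow>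
        (DQ (VaR M) \<alpha> n X = 0 \<longleftrightarrow>
         (AE \<omega> in M. (\<Sum>i<n. X i \<omega>) \<le> (\<Sum>i<n. VaR M \<alpha> (X i)))))
   \<and> ((\<forall>i<n. integrable M (X i)) \<longrightarrow>
        (DQ (ES M) \<alpha> n X = 0 \<longleftrightarrow>
         (AE \<omega> in M. (\<Sum>i<n. X i \<omega>) \<le> (\<Sum>i<n. ES M \<alpha> (X i)))))
   \<and> (\<forall>c. (\<forall>i<n. integrable M (X i)) \<and> (AE \<omega> in M. (\<Sum>i<n. X i \<omega>) = c) \<longrightarrow>
        DQ (ES M) \<alpha> n X = 0)
   \<and> (\<forall>c. (\<forall>i<n. X i \<in> borel_measurable M) \<and> (AE \<omega> in M. (\<Sum>i<n. X i \<omega>) = c)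
          \<and> \<alpha> < 1 / real n \<longrightarrow>
        DQ (VaR M) \<alpha> n X = 0)"
proof -
  interpret prob_space M by fact
  have VaR_case: "DQ (VaR M) \<alpha> n X = 0 \<longleftrightarrow>
      (AE \<omega> in M. (\<Sum>i<n. X i \<omega>) \<le> (\<Sum>i<n. VaR M \<alpha> (X i)))"
    if "\<forall>i<n. X i \<in> borel_measurable M"
    unfolding DQ_eq_0_iff[OF \<open>0 < \<alpha>\<close>]
    by (rule AE_le_iff_VaR_le_arbitrarily_small[symmetric]) (use that in \<open>auto intro: borel_measurable_sum\<close>)
  have ES_case: "DQ (ES M) \<alpha> n X = 0 \<longleftrightarrow>
      (AE \<omega> in M. (\<Sum>i<n. X i \<omega>) \<le> (\<Sum>i<n. ES M \<alpha> (X i)))"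
    if "\<forall>i<n. integrable M (X i)"
    unfolding DQ_eq_0_iff[OF \<open>0 < \<alpha>\<close>]
    by (rule AE_le_iff_ES_le_arbitrarily_small[symmetric]) (use that in auto)
  have AE_sum_le: "AE \<omega> in M. (\<Sum>i<n. X i \<omega>) \<le> b"
    if "AE \<omega> in M. (\<Sum>i<n. X i \<omega>) = c" "c \<le> b" for b c
    using that(1) by eventually_elim (use that(2) in simp)
  have ES_const: "DQ (ES M) \<alpha> n X = 0"
    if "\<forall>i<n. integrable M (X i)" "AE \<omega> in M. (\<Sum>i<n. X i \<omega>) = c" for c
    using that assms(4,5) ES_case AE_sum_le AE_sum_eq_le_sum_ES[of "{..<n}" X c \<alpha>] by simp
  have VaR_const: "DQ (VaR M) \<alpha> n X = 0"
    if "\<forall>i<n. X i \<in> borel_measurable M" "AE \<omega> in M. (\<Sum>i<n. X i \<omega>) = c" "\<alpha> < 1 / real n" for c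
  proof -
    have "real n * \<alpha> < 1" using that(3) \<open>n \<ge> 2\<close> by (simp add: field_simps)
    then show ?thesis
      using that assms(4,5) VaR_case AE_sum_le AE_sum_eq_le_sum_VaR[of "{..<n}" X c \<alpha>] by simp
  qed
  show ?thesis using VaR_case ES_case ES_const VaR_const by blast
qed

end
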